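(* For every $n\ge 1$ and every Dyck path $D\in\mathcal{D}_n$, the poset $\psi(D)$ is isomorphic to $\Xi_{\mathrm{poset}}(\Lambda_{\mathrm{steep}}(D))$; that is, $\psi=\Xi_{\mathrm{poset}}\circ\Lambda_{\mathrm{steep}}$ as maps to unit interval posets up to isomorphism.
   Context: A Dyck path of size $n$ is a lattice path from $(0,0)$ to $(n,n)$ with steps $\uparrow=(0,1)$ and $\rightarrow=(1,0)$ staying weakly above $y=x$; $\mathcal{D}_n$ is their set. Its area vector $(a_1,\dots,a_n)$ has $a_i$ equal to the number of full unit squares lying between the path and the diagonal $y=x$ in the row $i-1\le y\le i$. A plane tree is either a single node, or a root joined to an ordered (left-to-right) sequence of plane trees whose roots are its children; $\mathcal{T}_n$ is the set of plane trees with $n$ non-root nodes; the depth $d(u)$ of a node is its distance to the root. For a finite $S=\{x_1<\dots<x_n\}\subset\mathbb{R}$, $\preceq_S$ is the partial order on $[n]$ with $i\prec_S j$ iff $x_i+1<x_j$. $\Xi_{\mathrm{steep}}$: for $T\in\mathcal{T}_n$, perform the clockwise contour walk around $T$ starting at the root (so subtrees are visited from right to left); append $\uparrow$ each time an edge is traversed for the first time and $\rightarrow$ each time it is traversed for the second time. This is a bijection $\mathcal{T}_n\to\mathcal{D}_n$; $\Lambda_{\mathrm{steep}}$ is its inverse. $\Xi_{\mathrm{poset}}$: for $T\in\mathcal{T}_n$ with maximal number of children $m$, for a non-root node $u$ let $c(u)=i$ if $u$ is the $i$-th child of its parent counted from right to left; with $u_0=\text{root},\dots,u_{d(u)}=u$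 the root-to-$u$ path set $x_u=d(u)+\sum_{i=1}^{d(u)}c(u_i)(m+2)^{-i}$; with $S=\{x_u: u\text{ non-root}\}$, $\Xi_{\mathrm{poset}}(T)=([n],\preceq_S)$. $\psi$: for $D\in\mathcal{D}_n$ with area vector $(a_1,\dots,a_n)$, $\psi(D)$ is the poset on $[n]$ with $i\prec j$ iff either $a_i+2\le a_j$, or ($a_i+1=a_j$ and $i<j$). *)

theory Defs
  imports Complex_Main
begin

datatype ptree = Node "ptree list"

fun children :: "ptree \<Rightarrow> ptree list" where
  "children (Node cs) = cs"

fun tsize :: "ptree \<Rightarrow> nat" where
  "tsize (Node cs) = (\<Sum>c\<leftarrow>cs. Suc (tsize c))"

definition plane_trees :: "nat \<Rightarrow> ptree set" where
  "plane_trees n = {T. tsize T = n}"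

fun maxch :: "ptree \<Rightarrow> nat" where
  "maxch (Node cs) = Max (insert (length cs) (set (map maxch cs)))"

text \<open>A path is a list of steps: True = up step (0,1), False = right step (1,0).\<close>
definition count_up :: "bool list \<Rightarrow> nat" where
  "count_up D = length (filter (\<lambda>s. s) D)"

definition count_right :: "bool list \<Rightarrow> nat" where
  "count_right D = length (filter (\<lambda>s. \<not> s) D)"

definition dyck_paths :: "nat \<Rightarrow> bool list set" where
  "dyck_paths n = {D. count_up D = n \<and> count_right D = n \<and>
      (\<forall>k \<le> length D. count_right (take k D) \<le> count_up (take k D))}"

text \<open>Area vector: the i-th up step (i = 1..n) starts at (r, i-1), where r is the
  number of right steps before it; row i-1 <= y <= i then contains (i-1) - r full
  unit squares between the path and the diagonal. u = number of up steps so far,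
  r = number of right steps so far.\<close>
fun area_aux :: "nat \<Rightarrow> nat \<Rightarrow> bool list \<Rightarrow> nat list" where
  "area_aux u r [] = []"
| "area_aux u r (True # D) = (u - r) # area_aux (Suc u) r D"
| "area_aux u r (False # D) = area_aux u (Suc r) D"

definition area_vector :: "bool list \<Rightarrow> nat list" where
  "area_vector D = area_aux 0 0 D"

text \<open>a_i for 1-based i.\<close>
definition area :: "bool list \<Rightarrow> nat \<Rightarrow> nat" where
  "area D i = area_vector D ! (i - 1)"

text \<open>A poset is given by its carrier and its strict order relation.\<close>
type_synonym poset = "nat set \<times> (nat \<Rightarrow> nat \<Rightarrow> bool)"

definition poset_iso :: "poset \<Rightarrow> poset \<Rightarrow> bool" where
  "poset_iso P Q \<longleftrightarrow> (\<exists>f. bij_betw f (fst P) (fst Q) \<and>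
      (\<forall>i\<in>fst P. \<forall>j\<in>fst P. snd P i j \<longleftrightarrow> snd Q (f i) (f j)))"

definition psi :: "bool list \<Rightarrow> poset" where
  "psi D = ({1..count_up D},
     (\<lambda>i j. i \<in> {1..count_up D} \<and> j \<in> {1..count_up D} \<and>
        (area D i + 2 \<le> area D j \<or> (area D i + 1 = area D j \<and> i < j))))"

text \<open>Clockwise contour walk from the root: subtrees visited right to left;
  up step on first traversal of an edge, right step on the second.\<close>
fun Xi_steep :: "ptree \<Rightarrow> bool list" where
  "Xi_steep (Node cs) = concat (map (\<lambda>c. True # Xi_steep c @ [False]) (rev cs))"

definition Lambda_steep :: "bool list \<Rightarrow> ptree" where
  "Lambda_steep D = (THE T. Xi_steep T = D)"

text \<open>Non-root nodes are encoded by the list (c(u_1), ..., c(u_d)) of right-to-left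
  child indices along the root-to-node path. In a list c # cs of children, the
  first child c has right-to-left index length (c # cs).\<close>
fun node_codes :: "ptree \<Rightarrow> nat list list"
  and node_codes_list :: "ptree list \<Rightarrow> nat list list" where
  "node_codes (Node cs) = node_codes_list cs"
| "node_codes_list [] = []"
| "node_codes_list (c # cs) =
     map (Cons (length (c # cs))) ([] # node_codes c) @ node_codes_list cs"

definition xval :: "nat \<Rightarrow> nat list \<Rightarrow> real" where
  "xval m p = real (length p) + (\<Sum>i<length p. real (p ! i) / (real m + 2) ^ (i + 1))"

definition Xi_S :: "ptree \<Rightarrow> real set" where
  "Xi_S T = xval (maxch T) ` set (node_codes T)"

definition unit_interval_poset :: "real set \<Rightarrow> poset" where
  "unit_interval_poset S = ({1..card S},
     (\<lambda>i j. i \<in> {1..card S} \<and> j \<in> {1..card S} \<and>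
        sorted_list_of_set S ! (i - 1) + 1 < sorted_list_of_set S ! (j - 1)))"

definition Xi_poset :: "ptree \<Rightarrow> poset" where
  "Xi_poset T = unit_interval_poset (Xi_S T)"

end

theory Submission
  imports Defs
begin

text \<open>Let \<open>T = \<Lambda>\<^sub>s\<^sub>t\<^sub>e\<^sub>e\<^sub>p(D)\<close>. The \<open>i\<close>-th up step of \<open>D\<close> is the first traversal of the edge
  above the \<open>i\<close>-th non-root node met by the clockwise contour walk, and the area entry \<open>a\<^sub>i\<close> is
  the depth of that node minus one. The walk meets the nodes in lexicographic order of their
  codes \<open>(c(u\<^sub>1), \<dots>, c(u\<^sub>d))\<close>, and \<open>x\<^sub>u\<close> is \<open>d(u)\<close> plus a fraction in \<open>[0,1)\<close> that is
  strictly increasing in this order. Hence \<open>x\<^sub>u + 1 < x\<^sub>v\<close> iff \<open>d(v) \<ge> d(u) + 2\<close>, or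
  \<open>d(v) = d(u) + 1\<close> and \<open>u\<close> comes before \<open>v\<close>: this is exactly the relation of \<open>\<psi>(D)\<close>, so
  listing the \<open>x\<^sub>u\<close> in contour order is an isomorphism onto the unit interval order.\<close>

lemma ptree_induct_snoc [case_names Leaf Snoc]:
  assumes "P (Node [])" and "\<And>c cs. P c \<Longrightarrow> P (Node cs) \<Longrightarrow> P (Node (cs @ [c]))"
  shows "P T"
proof (induction T)
  case (Node cs)
  then show ?case by (induction cs rule: rev_induct) (auto intro: assms)
qed

lemma ptree_induct_cons [case_names Leaf Cons]:
  assumes "P (Node [])" and "\<And>c cs. P c \<Longrightarrow> P (Node cs) \<Longrightarrow> P (Node (c # cs))"
  shows "P T"
proof (induction T)
  case (Node cs)
  then show ?case by (induction cs) (auto intro: assms)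
qed

lemma count_up_simps [simp]:
  "count_up [] = 0" "count_up (True # w) = Suc (count_up w)" "count_up (False # w) = count_up w"
  "count_up (u @ v) = count_up u + count_up v"
  by (simp_all add: count_up_def)

lemma count_right_simps [simp]:
  "count_right [] = 0" "count_right (True # w) = count_right w"
  "count_right (False # w) = Suc (count_right w)"
  "count_right (u @ v) = count_right u + count_right v"
  by (simp_all add: count_right_def)

definition height :: "bool list \<Rightarrow> int" where
  "height w = int (count_up w) - int (count_right w)"

lemma height_simps [simp]:
  "height [] = 0" "height (True # w) = height w + 1" "height (False # w) = height w - 1"
  "height (u @ v) = height u + height v"
  by (simp_all add: height_def)

definition balanced :: "bool list \<Rightarrow> bool" where
  "balanced w \<longleftrightarrow> height w = 0 \<and> (\<forall>u v. w = u @ v \<longrightarrow> 0 \<le> height u)"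

lemma dyck_paths_balanced:
  assumes "D \<in> dyck_paths n"
  shows "balanced D"
proof -
  have prefix: "count_right (take k D) \<le> count_up (take k D)" if "k \<le> length D" for k
    using assms that by (simp add: dyck_paths_def)
  have "0 \<le> height u" if "D = u @ v" for u v
    using prefix[of "length u"] that by (simp add: height_def)
  moreover have "height D = 0"
    using assms by (simp add: dyck_paths_def height_def)
  ultimately show ?thesis by (simp add: balanced_def)
qed

lemma balanced_Nil [simp]: "balanced []"
  by (simp add: balanced_def)

lemma balanced_append: "balanced u \<Longrightarrow> balanced v \<Longrightarrow> balanced (u @ v)"
  by (auto simp: balanced_def append_eq_append_conv2)

lemma balanced_wrap:
  assumes "balanced w"
  shows "balanced (True # w @ [False])"
  unfolding balanced_def
proof (intro conjI allI impI)
  fix u v assume split: "True # w @ [False] = u @ v"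
  show "0 \<le> height u"
  proof (cases u)
    case (Cons x u')
    with split have x: "x = True" and rest: "w @ [False] = u' @ v" by simp_all
    from rest consider s where "w = u' @ s" | s where "u' = w @ s" "[False] = s @ v"
      by (auto simp: append_eq_append_conv2)
    then show ?thesis
    proof cases
      case 1
      with assms have "0 \<le> height u'" unfolding balanced_def by blast
      with Cons x show ?thesis by simp
    next
      case 2
      from 2(2) have "s = [] \<or> s = [False]" by (cases s) auto
      moreover have "height w = 0" using assms by (simp add: balanced_def)
      ultimately show ?thesis using Cons x 2(1) by auto
    qed
  qed simp
qed (use assms in \<open>simp add: balanced_def\<close>)

text \<open>A balanced word is determined by where its first unmatched right step occurs.\<close>

lemma balanced_append_False_cancel:
  assumes "balanced u" "balanced v" "u @ False # r = v @ False # s"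
  shows "u = v"
proof -
  have False if "balanced u" "balanced v" "u @ False # r = v @ False # s" "length u < length v"
    for u v r s
  proof -
    have "u @ [False] = take (length u + 1) (u @ False # r)" by simp
    also have "\<dots> = take (length u + 1) (v @ False # s)" using that(3) by simp
    also have "\<dots> = take (length u + 1) v" using that(4) by simp
    finally have "v = (u @ [False]) @ drop (length u + 1) v" by simp
    then have "0 \<le> height (u @ [False])" using that(2) unfolding balanced_def by blast
    with that(1) show False by (simp add: balanced_def)
  qed
  note impossible = this
  show ?thesis
  proof (cases "length u" "length v" rule: linorder_cases)
    case equal
    with assms(3) show ?thesis by (simp add: append_eq_append_conv)
  next
    case less
    from impossible[OF assms less] show ?thesis ..
  next
    case greater
    from impossible[OF assms(2,1) assms(3)[symmetric] greater] show ?thesis ..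
  qed
qed

lemma Xi_steep_Nil [simp]: "Xi_steep (Node []) = []"
  and Xi_steep_snoc [simp]:
    "Xi_steep (Node (cs @ [c])) = True # Xi_steep c @ False # Xi_steep (Node cs)"
  by simp_all

declare Xi_steep.simps [simp del]

lemma balanced_Xi_steep: "balanced (Xi_steep T)"
proof (induction T rule: ptree_induct_snoc)
  case (Snoc c cs)
  then have "balanced ((True # Xi_steep c @ [False]) @ Xi_steep (Node cs))"
    by (intro balanced_append balanced_wrap)
  then show ?case by simp
qed simp

lemma count_up_Xi_steep: "count_up (Xi_steep T) = tsize T"
  by (induction T rule: ptree_induct_snoc) simp_all

lemma inj_Xi_steep: "inj Xi_steep"
proof (rule injI)
  show "T = T'" if "Xi_steep T = Xi_steep T'" for T T'
    using that
  proof (induction T arbitrary: T' rule: ptree_induct_snoc)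
    case Leaf
    obtain cs' where "T' = Node cs'" by (cases T')
    with Leaf show ?case by (cases cs' rule: rev_exhaust) simp_all
  next
    case (Snoc c cs)
    obtain cs' where T': "T' = Node cs'" by (cases T')
    with Snoc.prems obtain ds d where cs': "cs' = ds @ [d]"
      by (cases cs' rule: rev_exhaust) simp_all
    with Snoc.prems T' have "Xi_steep c @ False # Xi_steep (Node cs) =
        Xi_steep d @ False # Xi_steep (Node ds)" by simp
    moreover from this have "Xi_steep c = Xi_steep d"
      by (rule balanced_append_False_cancel[OF balanced_Xi_steep balanced_Xi_steep])
    ultimately have "c = d" "Node cs = Node ds" using Snoc.IH by simp_all
    with T' cs' show ?case by simp
  qed
qed

lemma exists_first_return:
  "height w + int k < 0 \<Longrightarrow> \<exists>u v. w = u @ False # v \<and> height u + int k = 0 \<and>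
     (\<forall>p q. u = p @ q \<longrightarrow> 0 \<le> height p + int k)"
proof (induction w arbitrary: k)
  case (Cons x w)
  show ?case
  proof (cases "x \<or> k > 0")
    case True
    define k' where "k' = (if x then Suc k else k - 1)"
    have shift: "height (x # p) + int k = height p + int k'" for p
      using True by (auto simp: k'_def)
    from Cons.prems have "height w + int k' < 0" by (simp add: shift[symmetric])
    from Cons.IH[OF this] obtain u v where uv: "w = u @ False # v" "height u + int k' = 0"
      "\<forall>p q. u = p @ q \<longrightarrow> 0 \<le> height p + int k'" by blast
    have "0 \<le> height p + int k" if "x # u = p @ q" for p q
      using that uv(3) shift by (cases p) auto
    with uv shift show ?thesis by (intro exI[of _ "x # u"] exI[of _ v]) simp
  next
    case False
    then show ?thesis by (intro exI[of _ "[]"] exI[of _ w]) simp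
  qed
qed simp

lemma balanced_decompose:
  assumes "balanced D" "D \<noteq> []"
  shows "\<exists>w r. D = True # w @ False # r \<and> balanced w \<and> balanced r"
proof -
  obtain x D' where D: "D = x # D'" using assms(2) by (cases D) auto
  have x: "x = True"
  proof (rule ccontr)
    assume "x \<noteq> True"
    with D have "D = [False] @ D'" by simp
    with assms(1) have "0 \<le> height [False]" unfolding balanced_def by blast
    then show False by simp
  qed
  from assms(1) D x have "height D' + int 0 < 0" by (simp add: balanced_def)
  from exists_first_return[OF this] obtain w r where wr: "D' = w @ False # r" "height w = 0"
    "\<forall>p q. w = p @ q \<longrightarrow> 0 \<le> height p" by auto
  have "0 \<le> height p" if "r = p @ q" for p q
  proof -
    from that D x wr have "D = (True # w @ False # p) @ q" by simp
    with assms(1) have "0 \<le> height (True # w @ False # p)" unfolding balanced_def by blast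
    with wr(2) show ?thesis by simp
  qed
  moreover from assms(1) D x wr have "height r = 0" by (simp add: balanced_def)
  ultimately show ?thesis using D x wr by (auto simp: balanced_def)
qed

lemma Xi_steep_surj: "balanced D \<Longrightarrow> \<exists>T. Xi_steep T = D"
proof (induction "length D" arbitrary: D rule: less_induct)
  case less
  show ?case
  proof (cases "D = []")
    case True
    then show ?thesis by (intro exI[of _ "Node []"]) simp
  next
    case False
    with less.prems obtain w r where wr: "D = True # w @ False # r" "balanced w" "balanced r"
      using balanced_decompose by blast
    from less.hyps[of w] wr obtain Tw where "Xi_steep Tw = w" by auto
    moreover from less.hyps[of r] wr obtain Tr where "Xi_steep Tr = r" by auto
    moreover obtain cs where "Tr = Node cs" by (cases Tr)
    ultimately show ?thesis using wr(1) by (intro exI[of _ "Node (cs @ [Tw])"]) simp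
  qed
qed

lemma Xi_steep_Lambda_steep: "balanced D \<Longrightarrow> Xi_steep (Lambda_steep D) = D"
  unfolding Lambda_steep_def
  by (rule theI') (use Xi_steep_surj inj_Xi_steep in \<open>blast dest: injD\<close>)

text \<open>The codes of the non-root nodes in the order in which the clockwise contour walk first
  reaches them: the subtrees are listed from the last child to the first.\<close>

fun contour_codes :: "ptree \<Rightarrow> nat list list" where
  "contour_codes (Node []) = []"
| "contour_codes (Node (c # cs)) =
     contour_codes (Node cs) @ map (Cons (length (c # cs))) ([] # contour_codes c)"

lemma Xi_steep_Cons:
  "Xi_steep (Node (c # cs)) = Xi_steep (Node cs) @ True # Xi_steep c @ [False]"
  using Xi_steep_snoc[of "rev cs" c] by (simp add: Xi_steep.simps)

lemma area_aux_Xi_steep: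
  "r \<le> u \<Longrightarrow> area_aux u r (Xi_steep T @ ys) =
     map (\<lambda>p. u - r + length p - 1) (contour_codes T) @ area_aux (u + tsize T) (r + tsize T) ys"
proof (induction T arbitrary: u r ys rule: ptree_induct_cons)
  case (Cons c cs)
  let ?t = "tsize (Node cs)"
  have "area_aux u r (Xi_steep (Node (c # cs)) @ ys) =
      map (\<lambda>p. u - r + length p - 1) (contour_codes (Node cs)) @
      area_aux (u + ?t) (r + ?t) (True # Xi_steep c @ False # ys)"
    using Cons.IH(2)[OF Cons.prems] by (simp add: Xi_steep_Cons)
  also have "area_aux (u + ?t) (r + ?t) (True # Xi_steep c @ False # ys) =
      (u - r) # map (\<lambda>p. u - r + length p) (contour_codes c) @
      area_aux (Suc (u + ?t + tsize c)) (r + ?t + tsize c) (False # ys)"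
    using Cons.IH(1)[of "r + ?t" "Suc (u + ?t)"] Cons.prems by simp
  finally show ?case using Cons.prems by (simp add: comp_def add_ac)
qed simp

lemma area_vector_Xi_steep:
  "area_vector (Xi_steep T) = map (\<lambda>p. length p - 1) (contour_codes T)"
  using area_aux_Xi_steep[of 0 0 T "[]"] by (simp add: area_vector_def)

lemma length_contour_codes: "length (contour_codes T) = tsize T"
  by (induction T rule: ptree_induct_cons) simp_all

lemma set_contour_codes: "set (contour_codes T) = set (node_codes T)"
  by (induction T rule: ptree_induct_cons) auto

lemma contour_codes_hd:
  "p \<in> set (contour_codes T) \<Longrightarrow> \<exists>d q. p = d # q \<and> d \<in> {1..length (children T)}"
proof (cases T)
  case (Node cs)
  then show "p \<in> set (contour_codes T) \<Longrightarrow> ?thesis" by (induction cs arbitrary: T) auto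
qed

lemma maxch_Node_Cons:
  "length (c # cs) \<le> maxch (Node (c # cs))" "maxch c \<le> maxch (Node (c # cs))"
  "maxch (Node cs) \<le> maxch (Node (c # cs))"
proof -
  show "length (c # cs) \<le> maxch (Node (c # cs))" "maxch c \<le> maxch (Node (c # cs))"
    by (simp_all add: le_max_iff_disj Max_ge_iff)
  show "maxch (Node cs) \<le> maxch (Node (c # cs))"
    unfolding maxch.simps by (rule Max.boundedI) (auto simp: le_max_iff_disj Max_ge_iff)
qed

lemma contour_codes_digits: "p \<in> set (contour_codes T) \<Longrightarrow> set p \<subseteq> {1..maxch T}"
proof (induction T arbitrary: p rule: ptree_induct_cons)
  case (Cons c cs)
  from Cons.prems consider "p \<in> set (contour_codes (Node cs))" | "p = [length (c # cs)]"
    | q where "q \<in> set (contour_codes c)" "p = length (c # cs) # q"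
    by auto
  then show ?case
  proof cases
    case 1
    with Cons.IH(2) maxch_Node_Cons(3)[of cs c] show ?thesis by (force simp del: maxch.simps)
  next
    case 2
    with maxch_Node_Cons(1)[of c cs] show ?thesis by (simp del: maxch.simps)
  next
    case 3
    with Cons.IH(1) maxch_Node_Cons(1,2)[of c cs] show ?thesis by (force simp del: maxch.simps)
  qed
qed simp

abbreviation lex_less :: "nat list \<Rightarrow> nat list \<Rightarrow> bool" where
  "lex_less p q \<equiv> (p, q) \<in> lexord less_than"

lemma lex_less_total: "p \<noteq> q \<Longrightarrow> lex_less p q \<or> lex_less q p"
  using lexord_linear[of less_than p q] by (simp add: less_than_iff linorder_less_linear)

lemma asymp_lex_less: "asymp lex_less"
  unfolding asymp_asym_eq by (rule lexord_asym[OF asym_less_than])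

lemma sorted_contour_codes: "sorted_wrt lex_less (contour_codes T)"
proof (induction T rule: ptree_induct_cons)
  case (Cons c cs)
  let ?k = "length (c # cs)"
  have "lex_less [?k] (?k # q)" if "q \<in> set (contour_codes c)" for q
    using contour_codes_hd[OF that] by auto
  moreover have "lex_less p (?k # q)" if "p \<in> set (contour_codes (Node cs))" for p q
    using contour_codes_hd[OF that] by auto
  ultimately show ?case
    using Cons.IH by (auto simp: sorted_wrt_append sorted_wrt_map)
qed simp

fun digit_frac :: "real \<Rightarrow> nat list \<Rightarrow> real" where
  "digit_frac B [] = 0"
| "digit_frac B (d # p) = (real d + digit_frac B p) / B"

lemma sum_digits_eq_digit_frac:
  assumes "B \<noteq> 0"
  shows "(\<Sum>i<length p. real (p ! i) / B ^ (i + 1)) = digit_frac B p"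
proof (induction p)
  case (Cons d p)
  have "(\<Sum>i<length (d # p). real ((d # p) ! i) / B ^ (i + 1)) =
      real d / B + (\<Sum>i<length p. real (p ! i) / B ^ (i + 1)) / B"
    by (simp add: sum.lessThan_Suc_shift sum_divide_distrib mult.commute
        del: sum.lessThan_Suc)
  with Cons show ?case by (simp add: add_divide_distrib)
qed simp

lemma xval_eq: "xval m p = real (length p) + digit_frac (real m + 2) p"
  unfolding xval_def by (subst sum_digits_eq_digit_frac) auto

lemma digit_frac_bounds:
  assumes "set p \<subseteq> {1..m}" "real m + 1 \<le> B"
  shows "0 \<le> digit_frac B p" "digit_frac B p < 1"
  using assms(1)
proof (induction p)
  case (Cons d p)
  { case 1 with Cons.IH(1) assms(2) show ?case by simp }
  { case 2
    with Cons.IH assms(2) have "real d + digit_frac B p < B" by auto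
    with assms(2) show ?case by simp }
qed simp_all

lemma digit_frac_strict_mono:
  assumes "set p \<subseteq> {1..m}" "set q \<subseteq> {1..m}" "real m + 1 \<le> B" "lex_less p q"
  shows "digit_frac B p < digit_frac B q"
  using assms(1,2,4)
proof (induction p arbitrary: q)
  case Nil
  then obtain d q' where q: "q = d # q'" "d \<ge> 1" "set q' \<subseteq> {1..m}" by (cases q) auto
  with digit_frac_bounds(1)[OF _ assms(3)] have "0 < real d + digit_frac B q'" by fastforce
  with q assms(3) show ?case by simp
next
  case (Cons d p)
  then obtain e q' where q: "q = e # q'" by (cases q) auto
  with Cons.prems have "d < e \<or> d = e \<and> lex_less p q'" by auto
  moreover have "digit_frac B p < 1" "0 \<le> digit_frac B q'"
    using digit_frac_bounds[OF _ assms(3)] Cons.prems q by auto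
  ultimately have "real d + digit_frac B p < real e + digit_frac B q'"
    using Cons.IH[of q'] Cons.prems q by fastforce
  with q assms(3) show ?case by (simp add: divide_strict_right_mono)
qed

lemma xval_bounds:
  assumes "set p \<subseteq> {1..m}"
  shows "real (length p) \<le> xval m p" "xval m p < real (length p) + 1"
  using digit_frac_bounds[OF assms, of "real m + 2"] by (simp_all add: xval_eq)

lemma xval_add_one_less_iff:
  assumes p: "set p \<subseteq> {1..m}" and q: "set q \<subseteq> {1..m}"
  shows "xval m p + 1 < xval m q \<longleftrightarrow>
    length p + 2 \<le> length q \<or> length q = length p + 1 \<and> lex_less p q"
proof (cases "length q = length p + 1")
  case True
  let ?f = "digit_frac (real m + 2)"
  have "xval m p + 1 < xval m q \<longleftrightarrow> ?f p < ?f q"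
    using True by (simp add: xval_eq)
  also have "\<dots> \<longleftrightarrow> lex_less p q"
  proof
    assume less: "?f p < ?f q"
    from True have "p \<noteq> q" by auto
    with less show "lex_less p q"
      using digit_frac_strict_mono[OF q p, of "real m + 2"] lex_less_total[of p q] by force
  qed (rule digit_frac_strict_mono[OF p q]; simp)
  finally show ?thesis using True by simp
next
  case False
  then show ?thesis using xval_bounds[OF p] xval_bounds[OF q] by auto
qed

lemma inj_on_xval: "inj_on (xval m) {p. set p \<subseteq> {1..m}}"
proof (rule inj_onI)
  fix p q assume p: "p \<in> {p. set p \<subseteq> {1..m}}" and q: "q \<in> {p. set p \<subseteq> {1..m}}"
    and eq: "xval m p = xval m q"
  then have "length p = length q"
    using xval_bounds[of p m] xval_bounds[of q m] by simp
  with eq have "digit_frac (real m + 2) p = digit_frac (real m + 2) q"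
    by (simp add: xval_eq)
  with p q show "p = q"
    using digit_frac_strict_mono[of p m q "real m + 2"] digit_frac_strict_mono[of q m p "real m + 2"]
      lex_less_total[of p q]
    by force
qed

lemma sorted_wrt_nth_iff_less:
  assumes "sorted_wrt R xs" "asymp R" "i < length xs" "j < length xs"
  shows "R (xs ! i) (xs ! j) \<longleftrightarrow> i < j"
  using sorted_wrt_nth_less[OF assms(1) _ assms(4)] sorted_wrt_nth_less[OF assms(1) _ assms(3)]
    asympD[OF assms(2)] by (metis linorder_neqE_nat)

lemma distinct_if_sorted_wrt_asymp: "sorted_wrt R xs \<Longrightarrow> asymp R \<Longrightarrow> distinct xs"
  by (induction xs) (auto dest: asympD)

lemma bij_betw_nth_pred:
  assumes "distinct xs"
  shows "bij_betw (\<lambda>i. xs ! (i - 1)) {1..length xs} (set xs)"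
proof -
  have "bij_betw (\<lambda>i. i - 1) {1..length xs} {..<length xs}"
    by (rule bij_betw_byWitness[where f' = Suc]) auto
  from bij_betw_trans[OF this bij_betw_nth[OF assms refl refl]] show ?thesis
    by (simp add: comp_def)
qed

lemma poset_iso_unit_interval_poset:
  fixes xs :: "real list"
  assumes "distinct xs"
  defines "N \<equiv> length xs"
  shows "poset_iso
    ({1..N}, \<lambda>i j. i \<in> {1..N} \<and> j \<in> {1..N} \<and> xs ! (i - 1) + 1 < xs ! (j - 1))
    (unit_interval_poset (set xs))"
proof -
  define L where "L = sorted_list_of_set (set xs)"
  have card: "card (set xs) = N" using assms by (simp add: N_def distinct_card)
  then have L: "distinct L" "set L = set xs" "length L = N" by (simp_all add: L_def)
  have bij_xs: "bij_betw (\<lambda>i. xs ! (i - 1)) {1..N} (set xs)"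
    using bij_betw_nth_pred[OF assms(1)] by (simp add: N_def)
  have bij_L: "bij_betw (\<lambda>i. L ! (i - 1)) {1..N} (set xs)"
    using bij_betw_nth_pred[OF L(1)] L by simp
  define f where "f = inv_into {1..N} (\<lambda>i. L ! (i - 1)) \<circ> (\<lambda>i. xs ! (i - 1))"
  have f: "bij_betw f {1..N} {1..N}"
    unfolding f_def by (rule bij_betw_trans[OF bij_xs bij_betw_inv_into[OF bij_L]])
  have L_f: "L ! (f i - 1) = xs ! (i - 1)" if "i \<in> {1..N}" for i
  proof -
    have "xs ! (i - 1) \<in> (\<lambda>i. L ! (i - 1)) ` {1..N}"
      using bij_betw_apply[OF bij_xs that] bij_L by (simp add: bij_betw_def)
    from f_inv_into_f[OF this] show ?thesis by (simp add: f_def)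
  qed
  show ?thesis
    unfolding poset_iso_def unit_interval_poset_def fst_conv snd_conv card L_def[symmetric]
  proof (intro exI[of _ f] conjI ballI)
    fix i j assume ij: "i \<in> {1..N}" "j \<in> {1..N}"
    show "(i \<in> {1..N} \<and> j \<in> {1..N} \<and> xs ! (i - 1) + 1 < xs ! (j - 1)) \<longleftrightarrow>
        (f i \<in> {1..N} \<and> f j \<in> {1..N} \<and> L ! (f i - 1) + 1 < L ! (f j - 1))"
      using ij bij_betw_apply[OF f] L_f by simp
  qed (rule f)
qed

lemma psi_Xi_steep:
  fixes T :: ptree
  defines "xs \<equiv> map (xval (maxch T)) (contour_codes T)"
  shows "psi (Xi_steep T) = ({1..length xs},
    \<lambda>i j. i \<in> {1..length xs} \<and> j \<in> {1..length xs} \<and> xs ! (i - 1) + 1 < xs ! (j - 1))"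
proof -
  let ?P = "contour_codes T"
  have count: "count_up (Xi_steep T) = length xs"
    by (simp add: xs_def count_up_Xi_steep length_contour_codes)
  have "(area (Xi_steep T) i + 2 \<le> area (Xi_steep T) j \<or>
        area (Xi_steep T) i + 1 = area (Xi_steep T) j \<and> i < j) \<longleftrightarrow>
      xs ! (i - 1) + 1 < xs ! (j - 1)"
    if "i \<in> {1..length xs}" "j \<in> {1..length xs}" for i j
  proof -
    from that have ij: "i - 1 < length ?P" "j - 1 < length ?P" by (auto simp: xs_def)
    then have codes: "?P ! (i - 1) \<in> set ?P" "?P ! (j - 1) \<in> set ?P" by simp_all
    have "lex_less (?P ! (i - 1)) (?P ! (j - 1)) \<longleftrightarrow> i < j"
      using sorted_wrt_nth_iff_less[OF sorted_contour_codes asymp_lex_less ij] that by auto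
    then have "xs ! (i - 1) + 1 < xs ! (j - 1) \<longleftrightarrow> length (?P ! (i - 1)) + 2 \<le> length (?P ! (j - 1))
        \<or> length (?P ! (j - 1)) = length (?P ! (i - 1)) + 1 \<and> i < j"
      using ij xval_add_one_less_iff[OF contour_codes_digits[OF codes(1)]
          contour_codes_digits[OF codes(2)]] by (simp add: xs_def)
    moreover have "area (Xi_steep T) i = length (?P ! (i - 1)) - 1"
      "area (Xi_steep T) j = length (?P ! (j - 1)) - 1"
      using ij by (simp_all add: area_def area_vector_Xi_steep)
    moreover have "length (?P ! (i - 1)) \<ge> 1" "length (?P ! (j - 1)) \<ge> 1"
      using contour_codes_hd[OF codes(1)] contour_codes_hd[OF codes(2)] by auto
    ultimately show ?thesis by (simp only:) arith
  qed
  then show ?thesis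
    unfolding psi_def count
    by (intro arg_cong[where f = "Pair {1..length xs}"] ext) blast
qed

theorem poset_iso_psi_Xi_poset: "poset_iso (psi (Xi_steep T)) (Xi_poset T)"
proof -
  define xs where "xs = map (xval (maxch T)) (contour_codes T)"
  have "distinct (contour_codes T)"
    by (rule distinct_if_sorted_wrt_asymp[OF sorted_contour_codes asymp_lex_less])
  moreover have "inj_on (xval (maxch T)) (set (contour_codes T))"
    by (rule inj_on_subset[OF inj_on_xval]) (use contour_codes_digits in blast)
  ultimately have "distinct xs" by (simp add: xs_def distinct_map)
  moreover have "Xi_S T = set xs"
    by (simp add: xs_def Xi_S_def set_contour_codes)
  ultimately show ?thesis
    unfolding psi_Xi_steep Xi_poset_def xs_def[symmetric]
    by (simp only: poset_iso_unit_interval_poset)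
qed

theorem mainTheorem4:
  fixes n :: nat and D :: "bool list"
  assumes "n \<ge> 1" and "D \<in> dyck_paths n"
  shows "poset_iso (psi D) (Xi_poset (Lambda_steep D))"
  using poset_iso_psi_Xi_poset[of "Lambda_steep D"]
  by (simp add: Xi_steep_Lambda_steep[OF dyck_paths_balanced[OF assms(2)]])

end
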